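(* Let $\mathbf S=\langle S,\wedge,1\rangle$ be a complete meet semilattice, and let $\operatorname{Sub}\mathbf S$ denote the lattice of all complete subsemilattices of $\mathbf S$ (subsets closed under arbitrary meets). Then there is a dual isomorphism between the complete sublattices of $\operatorname{Sub}\mathbf S$ and the quasi-orders $\varepsilon$ on $S$ satisfying: (1)$'$ if $\bigwedge_i c_i\,\varepsilon\,d$ then there exist elements $d_i$ with $c_i\,\varepsilon\,d_i$ for each $i$ and $d=\bigwedge_i d_i$; (2) if $1\,\varepsilon\,d$ then $d=1$; (3)$'$ if $c\,\varepsilon\,c_i$ for all $i$, then $c\,\varepsilon\,\bigwedge_i c_i$; (4) $c\,\varepsilon\,1$ for all $c\in S$. Under this correspondence, a complete sublattice $\mathbf T$ corresponds to the quasi-order $\rho$ with $c\,\rho\,d$ iff $c\in X\Rightarrow d\in X$ for all $X\in\mathbf T$, and a quasi-order $\varepsilon$ corresponds to the lattice of $\varepsilon$-closed complete subsemilattices.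
   Context: A subset $X$ is $\varepsilon$-closed if $c\in X$ and $c\,\varepsilon\,d$ imply $d\in X$. A complete sublattice of $\operatorname{Sub}\mathbf S$ is a subset closed under arbitrary meets and joins computed in $\operatorname{Sub}\mathbf S$. Quasi-orders are ordered by inclusion. *)

theory Defs
  imports Main
begin

text \<open>A complete meet semilattice with top 1 (closed under arbitrary meets, the empty
meet being 1) is the same as a complete lattice; we model S as a type of class
complete_lattice, with meet Inf and 1 = top.\<close>

definition SubS :: "'a::complete_lattice set set" where
  "SubS = {X. \<forall>A. A \<subseteq> X \<longrightarrow> Inf A \<in> X}"

definition sub_meet :: "'a::complete_lattice set set \<Rightarrow> 'a set" where
  "sub_meet F = \<Inter>F"

definition sub_join :: "'a::complete_lattice set set \<Rightarrow> 'a set" where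
  "sub_join F = \<Inter>{Y \<in> SubS. \<Union>F \<subseteq> Y}"

definition complete_sublattice_Sub :: "'a::complete_lattice set set \<Rightarrow> bool" where
  "complete_sublattice_Sub T \<longleftrightarrow> T \<subseteq> SubS \<and>
     (\<forall>F. F \<subseteq> T \<longrightarrow> sub_meet F \<in> T \<and> sub_join F \<in> T)"

definition quasi_order :: "'a rel \<Rightarrow> bool" where
  "quasi_order e \<longleftrightarrow> refl e \<and> trans e"

text \<open>Quasi-orders satisfying (1)', (2), (3)', (4). Families are indexed by subsets C of S
(equivalent to arbitrary indexed families).\<close>
definition admissible_qo :: "'a::complete_lattice rel \<Rightarrow> bool" where
  "admissible_qo e \<longleftrightarrow> quasi_order e \<and>
     (\<forall>C d. (Inf C, d) \<in> e \<longrightarrow>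
        (\<exists>f. (\<forall>c\<in>C. (c, f c) \<in> e) \<and> d = Inf (f ` C))) \<and>
     (\<forall>d. (top, d) \<in> e \<longrightarrow> d = top) \<and>
     (\<forall>c C. (\<forall>c'\<in>C. (c, c') \<in> e) \<longrightarrow> (c, Inf C) \<in> e) \<and>
     (\<forall>c. (c, top) \<in> e)"

definition rho_of :: "'a::complete_lattice set set \<Rightarrow> 'a rel" where
  "rho_of T = {(c, d). \<forall>X\<in>T. c \<in> X \<longrightarrow> d \<in> X}"

definition closed_by :: "'a rel \<Rightarrow> 'a set \<Rightarrow> bool" where
  "closed_by e X \<longleftrightarrow> (\<forall>c d. c \<in> X \<and> (c, d) \<in> e \<longrightarrow> d \<in> X)"

definition lat_of :: "'a::complete_lattice rel \<Rightarrow> 'a set set" where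
  "lat_of e = {X \<in> SubS. closed_by e X}"

end

theory Submission
  imports Defs
begin

text \<open>For a complete sublattice \<open>T\<close> of Sub S let \<open>\<up>\<^sub>T c\<close> be the least member of \<open>T\<close>
containing \<open>c\<close>; then \<open>c \<rho> d\<close> iff \<open>d \<in> \<up>\<^sub>T c\<close>. A \<open>\<rho>\<close>-closed complete subsemilattice \<open>X\<close> is
the join in Sub S (the meet closure of the union) of the sets \<open>\<up>\<^sub>T c\<close> with \<open>c \<in> X\<close>, so
\<open>X \<in> T\<close> and \<open>T\<close> is recovered from \<open>\<rho>\<close>; (1)' for \<open>\<rho>\<close> comes from splitting a meet lying in
the join of the \<open>\<up>\<^sub>T c\<close>, \<open>c \<in> C\<close>, along \<open>C\<close>. Conversely, (1)' makes the meet closure of a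
union of \<open>\<epsilon>\<close>-closed sets \<open>\<epsilon>\<close>-closed, so the \<open>\<epsilon>\<close>-closed complete subsemilattices form a
complete sublattice, and by (3)' and transitivity every upset \<open>{x. c \<epsilon> x}\<close> is one of them,
which recovers \<open>\<epsilon>\<close>.\<close>

lemma Inf_UNION: "Inf (\<Union>b\<in>B. g b) = (INF b\<in>B. Inf (g b :: 'a::complete_lattice set))"
  by (rule antisym) (auto intro!: Inf_greatest INF_greatest intro: Inf_lower INF_lower2 Inf_lower2)

definition Inf_closure :: "'a::complete_lattice set \<Rightarrow> 'a set" where
  "Inf_closure U = Inf ` Pow U"

lemma Inf_closure_in_SubS: "Inf_closure U \<in> SubS"
  unfolding SubS_def
proof (intro CollectI allI impI)
  fix B assume "B \<subseteq> Inf_closure U"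
  then have "\<forall>b\<in>B. \<exists>A. A \<subseteq> U \<and> b = Inf A"
    unfolding Inf_closure_def by blast
  then obtain g where g: "\<forall>b\<in>B. g b \<subseteq> U \<and> b = Inf (g b)"
    by metis
  then have "Inf B = (INF b\<in>B. Inf (g b))"
    by (intro arg_cong[where f=Inf]) auto
  then have "Inf B = Inf (\<Union>b\<in>B. g b)"
    by (simp add: Inf_UNION)
  then show "Inf B \<in> Inf_closure U"
    unfolding Inf_closure_def using g by blast
qed

lemma subset_Inf_closure: "U \<subseteq> Inf_closure U"
  unfolding Inf_closure_def by (auto intro!: image_eqI[where x="{_}"])

lemma Inf_closure_least: "Y \<in> SubS \<Longrightarrow> U \<subseteq> Y \<Longrightarrow> Inf_closure U \<subseteq> Y"
  unfolding Inf_closure_def SubS_def by auto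

lemma Inf_closure_of_SubS: "X \<in> SubS \<Longrightarrow> Inf_closure X = X"
  by (simp add: Inf_closure_least subset_Inf_closure subset_antisym)

lemma Inf_closure_empty: "Inf_closure {} = {top}"
  unfolding Inf_closure_def by simp

lemma sub_join_eq_Inf_closure: "sub_join F = Inf_closure (\<Union>F)"
proof (rule antisym)
  show "sub_join F \<subseteq> Inf_closure (\<Union>F)"
    unfolding sub_join_def by (intro Inter_lower) (simp add: Inf_closure_in_SubS subset_Inf_closure)
  show "Inf_closure (\<Union>F) \<subseteq> sub_join F"
    unfolding sub_join_def using Inf_closure_least by (intro Inter_greatest) blast
qed

lemma top_in_SubS: "X \<in> SubS \<Longrightarrow> top \<in> X"
proof -
  assume "X \<in> SubS"
  then have "Inf {} \<in> X" unfolding SubS_def by blast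
  then show "top \<in> X" by simp
qed

lemma complete_sublattice_SubD:
  assumes "complete_sublattice_Sub T"
  shows "T \<subseteq> SubS" and "F \<subseteq> T \<Longrightarrow> \<Inter>F \<in> T" and "F \<subseteq> T \<Longrightarrow> Inf_closure (\<Union>F) \<in> T"
  using assms unfolding complete_sublattice_Sub_def sub_meet_def sub_join_eq_Inf_closure
  by simp_all

definition principal :: "'a set set \<Rightarrow> 'a \<Rightarrow> 'a set" where
  "principal T c = \<Inter>{Y \<in> T. c \<in> Y}"

lemma principal_in:
  "complete_sublattice_Sub T \<Longrightarrow> principal T c \<in> T"
  unfolding principal_def by (rule complete_sublattice_SubD(2)) auto

lemma self_in_principal: "c \<in> principal T c"
  unfolding principal_def by blast

lemma rho_of_iff_principal:
  "complete_sublattice_Sub T \<Longrightarrow> (c, d) \<in> rho_of T \<longleftrightarrow> d \<in> principal T c"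
  unfolding rho_of_def principal_def by auto

lemma lat_of_rho_of:
  assumes T: "complete_sublattice_Sub T"
  shows "lat_of (rho_of T) = T"
proof
  show "T \<subseteq> lat_of (rho_of T)"
    using complete_sublattice_SubD(1)[OF T]
    unfolding lat_of_def closed_by_def rho_of_def by auto
  show "lat_of (rho_of T) \<subseteq> T"
  proof
    fix X assume X: "X \<in> lat_of (rho_of T)"
    have "principal T c \<subseteq> X" if "c \<in> X" for c
    proof
      fix d assume "d \<in> principal T c"
      then have "(c, d) \<in> rho_of T" by (simp add: rho_of_iff_principal[OF T])
      then show "d \<in> X" using X \<open>c \<in> X\<close> unfolding lat_of_def closed_by_def by blast
    qed
    then have "\<Union>(principal T ` X) = X"
      using self_in_principal by fast
    moreover have "Inf_closure (\<Union>(principal T ` X)) \<in> T"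
      using principal_in[OF T] by (intro complete_sublattice_SubD(3)[OF T]) auto
    moreover have "X \<in> SubS"
      using X unfolding lat_of_def by simp
    ultimately show "X \<in> T"
      by (simp add: Inf_closure_of_SubS)
  qed
qed

lemma rho_of_decompose_Inf:
  assumes T: "complete_sublattice_Sub T" and "(Inf C, d) \<in> rho_of T"
  shows "\<exists>f. (\<forall>c\<in>C. (c, f c) \<in> rho_of T) \<and> d = Inf (f ` C)"
proof -
  let ?U = "\<Union>(principal T ` C)"
  have "Inf_closure ?U \<in> T"
    using principal_in[OF T] by (intro complete_sublattice_SubD(3)[OF T]) auto
  moreover have "C \<subseteq> ?U"
    using self_in_principal by fast
  then have "Inf C \<in> Inf_closure ?U"
    unfolding Inf_closure_def by simp
  ultimately have "d \<in> Inf_closure ?U"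
    using assms(2) unfolding rho_of_def by auto
  then obtain A where A: "A \<subseteq> ?U" "d = Inf A"
    unfolding Inf_closure_def by blast
  \<comment> \<open>every element of \<open>A\<close> lies in some \<open>principal T c\<close>, so \<open>A\<close> splits along \<open>C\<close>\<close>
  define f where "f c = Inf (A \<inter> principal T c)" for c
  have "Inf (f ` C) = Inf (\<Union>c\<in>C. A \<inter> principal T c)"
    unfolding f_def by (rule Inf_UNION[symmetric])
  also have "(\<Union>c\<in>C. A \<inter> principal T c) = A"
    using A(1) by auto
  finally have "d = Inf (f ` C)" using A(2) by simp
  moreover have "(c, f c) \<in> rho_of T" for c
  proof -
    have "principal T c \<in> SubS"
      using principal_in[OF T] complete_sublattice_SubD(1)[OF T] by blast
    then have "f c \<in> principal T c"
      unfolding f_def SubS_def by simp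
    then show ?thesis by (simp add: rho_of_iff_principal[OF T])
  qed
  ultimately show ?thesis by blast
qed

lemma admissible_rho_of:
  assumes T: "complete_sublattice_Sub T"
  shows "admissible_qo (rho_of T)"
proof -
  have TS: "T \<subseteq> SubS" by (rule complete_sublattice_SubD(1)[OF T])
  have "quasi_order (rho_of T)"
    unfolding quasi_order_def refl_on_def trans_def rho_of_def by auto
  moreover have "{top} \<in> T"
    using complete_sublattice_SubD(3)[OF T, of "{}"] by (simp add: Inf_closure_empty)
  then have "\<forall>d. (top, d) \<in> rho_of T \<longrightarrow> d = top"
    unfolding rho_of_def by auto
  moreover have "\<forall>c C. (\<forall>c'\<in>C. (c, c') \<in> rho_of T) \<longrightarrow> (c, Inf C) \<in> rho_of T"
    using TS unfolding rho_of_def SubS_def by fast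
  moreover have "\<forall>c. (c, top) \<in> rho_of T"
    using TS top_in_SubS unfolding rho_of_def by fast
  ultimately show ?thesis
    unfolding admissible_qo_def using rho_of_decompose_Inf[OF T] by simp
qed

lemma
  assumes "admissible_qo e"
  shows admissible_qo_refl: "(c, c) \<in> e"
    and admissible_qo_trans: "trans e"
    and admissible_qo_decompose_Inf:
      "(Inf C, d) \<in> e \<Longrightarrow> \<exists>f. (\<forall>c\<in>C. (c, f c) \<in> e) \<and> d = Inf (f ` C)"
    and admissible_qo_Inf_upper: "(\<And>c'. c' \<in> C \<Longrightarrow> (c, c') \<in> e) \<Longrightarrow> (c, Inf C) \<in> e"
proof -
  show "(c, c) \<in> e" and "trans e"
    using assms unfolding admissible_qo_def quasi_order_def refl_on_def by auto
  show "(Inf C, d) \<in> e \<Longrightarrow> \<exists>f. (\<forall>c\<in>C. (c, f c) \<in> e) \<and> d = Inf (f ` C)"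
    using assms unfolding admissible_qo_def by simp
  show "(\<And>c'. c' \<in> C \<Longrightarrow> (c, c') \<in> e) \<Longrightarrow> (c, Inf C) \<in> e"
    using assms unfolding admissible_qo_def by simp
qed

lemma closed_by_Inf_closure_Union:
  assumes e: "admissible_qo e" and F: "\<And>X. X \<in> F \<Longrightarrow> closed_by e X"
  shows "closed_by e (Inf_closure (\<Union>F))"
  unfolding closed_by_def
proof (intro allI impI, elim conjE)
  fix c d assume "c \<in> Inf_closure (\<Union>F)" and cd: "(c, d) \<in> e"
  then obtain A where A: "A \<subseteq> \<Union>F" "c = Inf A"
    unfolding Inf_closure_def by blast
  then obtain f where f: "\<forall>a\<in>A. (a, f a) \<in> e" "d = Inf (f ` A)"
    using admissible_qo_decompose_Inf[OF e] cd by blast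
  have "f a \<in> \<Union>F" if "a \<in> A" for a
  proof -
    obtain X where "X \<in> F" "a \<in> X" using A(1) \<open>a \<in> A\<close> by blast
    then show ?thesis using F[of X] f(1) \<open>a \<in> A\<close> unfolding closed_by_def by blast
  qed
  then show "d \<in> Inf_closure (\<Union>F)"
    unfolding Inf_closure_def using f(2) by blast
qed

lemma complete_sublattice_lat_of:
  assumes e: "admissible_qo e"
  shows "complete_sublattice_Sub (lat_of e)"
  unfolding complete_sublattice_Sub_def
proof (intro conjI allI impI)
  show "lat_of e \<subseteq> SubS" unfolding lat_of_def by auto
  fix F assume F: "F \<subseteq> lat_of e"
  have "\<Inter>F \<in> SubS"
    using F unfolding SubS_def lat_of_def by (auto intro: Inf_lower2)
  moreover have "closed_by e (\<Inter>F)"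
    using F unfolding closed_by_def lat_of_def by auto
  ultimately show "sub_meet F \<in> lat_of e"
    unfolding sub_meet_def lat_of_def by simp
  have "closed_by e (Inf_closure (\<Union>F))"
    using F by (intro closed_by_Inf_closure_Union[OF e]) (auto simp: lat_of_def)
  then show "sub_join F \<in> lat_of e"
    unfolding lat_of_def sub_join_eq_Inf_closure by (simp add: Inf_closure_in_SubS)
qed

lemma upset_in_lat_of:
  assumes e: "admissible_qo e"
  shows "{x. (c, x) \<in> e} \<in> lat_of e"
proof -
  have "{x. (c, x) \<in> e} \<in> SubS"
    unfolding SubS_def using admissible_qo_Inf_upper[OF e] by auto
  moreover have "closed_by e {x. (c, x) \<in> e}"
    unfolding closed_by_def using admissible_qo_trans[OF e] by (auto elim: transE)
  ultimately show ?thesis unfolding lat_of_def by blast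
qed

lemma rho_of_lat_of:
  assumes e: "admissible_qo e"
  shows "rho_of (lat_of e) = e"
proof
  show "e \<subseteq> rho_of (lat_of e)"
    unfolding rho_of_def lat_of_def closed_by_def by auto
  show "rho_of (lat_of e) \<subseteq> e"
  proof clarify
    fix c d assume "(c, d) \<in> rho_of (lat_of e)"
    then have "\<forall>X\<in>lat_of e. c \<in> X \<longrightarrow> d \<in> X"
      unfolding rho_of_def by simp
    then have "c \<in> {x. (c, x) \<in> e} \<longrightarrow> d \<in> {x. (c, x) \<in> e}"
      using upset_in_lat_of[OF e] by (rule bspec)
    then show "(c, d) \<in> e" using admissible_qo_refl[OF e] by simp
  qed
qed

lemma rho_of_antimono: "T1 \<subseteq> T2 \<Longrightarrow> rho_of T2 \<subseteq> rho_of T1"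
  unfolding rho_of_def by blast

lemma lat_of_antimono: "e1 \<subseteq> e2 \<Longrightarrow> lat_of e2 \<subseteq> lat_of e1"
  unfolding lat_of_def closed_by_def by blast

theorem theorem8p2:
  shows "bij_betw (rho_of :: 'a::complete_lattice set set \<Rightarrow> 'a rel)
            {T. complete_sublattice_Sub T} {e. admissible_qo e}
       \<and> (\<forall>T :: 'a set set. complete_sublattice_Sub T \<longrightarrow> lat_of (rho_of T) = T)
       \<and> (\<forall>e :: 'a rel. admissible_qo e \<longrightarrow>
            complete_sublattice_Sub (lat_of e) \<and> rho_of (lat_of e) = e)
       \<and> (\<forall>T1 T2 :: 'a set set. complete_sublattice_Sub T1 \<longrightarrow> complete_sublattice_Sub T2 \<longrightarrow>
            (T1 \<subseteq> T2 \<longleftrightarrow> rho_of T2 \<subseteq> rho_of T1))"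
proof (intro conjI allI impI)
  show "bij_betw (rho_of :: 'a set set \<Rightarrow> 'a rel)
          {T. complete_sublattice_Sub T} {e. admissible_qo e}"
    by (rule bij_betw_byWitness[where f'=lat_of])
      (auto simp: lat_of_rho_of rho_of_lat_of admissible_rho_of complete_sublattice_lat_of)
next
  fix T1 T2 :: "'a set set"
  assume "complete_sublattice_Sub T1" "complete_sublattice_Sub T2"
  then show "T1 \<subseteq> T2 \<longleftrightarrow> rho_of T2 \<subseteq> rho_of T1"
    using lat_of_antimono[of "rho_of T2" "rho_of T1"] rho_of_antimono[of T1 T2]
    by (auto simp: lat_of_rho_of)
qed (simp_all add: lat_of_rho_of complete_sublattice_lat_of rho_of_lat_of)

end
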